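(* Consider the multiset combinatorial auction model described in the context, and an auction that first asks demand queries and then value queries, whose allocation after any set of reports is a solution of the winner determination problem (WDP) on the inferred values. In such an auction, adding value queries can reduce efficiency, and the efficiency drop can be arbitrarily close to $100\%$: for every $\delta>0$ there exist an instance, a finite set of demand queries with truthful responses after which the WDP allocation has efficiency $1$, and one value query per bidder (answered truthfully) such that, after adding these value-query responses, the WDP allocation has efficiency less than $\delta$.
   Context: Multiset combinatorial auction: bidders $N=\{1,\dots,n\}$, items $M=\{1,\dots,m\}$ with capacities $c\in\mathbb{N}^m$. Bundles are $x\in\mathcal{X}=\{0,\dots,c_1\}\times\cdots\times\{0,\dots,c_m\}$. Each bidder $i$ has a value function $v_i:\mathcal{X}\to\mathbb{R}_{\ge0}$. Feasible allocations: $\mathcal{F}=\{a\in\mathcal{X}^n:\sum_i a_{ij}\le c_j\ \forall j\}$. Social welfare $V(a)=\sum_i v_i(a_i)$; efficiency of $a$ is $V(a)/\max_{a'\in\mathcal{F}}V(a')$. A demand query at prices $p\in\mathbb{R}^m_{\ge0}$ is answered truthfully by bidder $i$ with some $x_i^*(p)\in\arg\max_{x\in\mathcal{X}}\{v_i(x)-\langle p,x\rangle\}$; a value query for $x$ is answered with $v_i(x)$. With reports $R_i$ consisting of demand responses $R_i^{DQ}$ (pairs $(x,p)$) and value responses $R_i^{VQ}$ (pairs $(x,v_i(x))$), the inferred value is $\tilde v_i(x;R_i)=v_i(x)$ if $x$ appears in $R_i^{VQ}$ and otherwise $\max(\{\langle x,p\rangle:(x,p)\in R_i^{DQ}\}\cup\{0\})$.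 The WDP allocation is $a^*(R)\in\arg\max_{a\in\mathcal{F}}\sum_i\tilde v_i(a_i;R_i)$. *)

theory Defs
  imports Complex_Main
begin

(* Items are 0..m-1, bidders 0..n-1. A bdl is a function nat => nat that is
  bounded by the capacities on items j < m and zero outside the item set. *)

type_synonym bdl = "nat \<Rightarrow> nat"
type_synonym prices = "nat \<Rightarrow> real"

definition bundles :: "nat \<Rightarrow> (nat \<Rightarrow> nat) \<Rightarrow> bdl set" where
  "bundles m c = {x. (\<forall>j<m. x j \<le> c j) \<and> (\<forall>j\<ge>m. x j = 0)}"

definition ip :: "nat \<Rightarrow> prices \<Rightarrow> bdl \<Rightarrow> real" where
  "ip m p x = (\<Sum>j<m. p j * real (x j))"

definition valid_prices :: "nat \<Rightarrow> prices \<Rightarrow> bool" where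
  "valid_prices m p \<longleftrightarrow> (\<forall>j<m. 0 \<le> p j)"

definition is_demand :: "nat \<Rightarrow> (nat \<Rightarrow> nat) \<Rightarrow> (bdl \<Rightarrow> real) \<Rightarrow> prices \<Rightarrow> bdl \<Rightarrow> bool" where
  "is_demand m c vi p x \<longleftrightarrow> x \<in> bundles m c \<and>
     (\<forall>y\<in>bundles m c. vi y - ip m p y \<le> vi x - ip m p x)"

definition feasible :: "nat \<Rightarrow> nat \<Rightarrow> (nat \<Rightarrow> nat) \<Rightarrow> (nat \<Rightarrow> bdl) set" where
  "feasible n m c = {a. (\<forall>i<n. a i \<in> bundles m c) \<and> (\<forall>i\<ge>n. a i = (\<lambda>_. 0))
                        \<and> (\<forall>j<m. (\<Sum>i<n. a i j) \<le> c j)}"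

definition welfare :: "nat \<Rightarrow> (nat \<Rightarrow> bdl \<Rightarrow> real) \<Rightarrow> (nat \<Rightarrow> bdl) \<Rightarrow> real" where
  "welfare n v a = (\<Sum>i<n. v i (a i))"

definition opt_welfare :: "nat \<Rightarrow> nat \<Rightarrow> (nat \<Rightarrow> nat) \<Rightarrow> (nat \<Rightarrow> bdl \<Rightarrow> real) \<Rightarrow> real" where
  "opt_welfare n m c v = Max (welfare n v ` feasible n m c)"

definition efficiency :: "nat \<Rightarrow> nat \<Rightarrow> (nat \<Rightarrow> nat) \<Rightarrow> (nat \<Rightarrow> bdl \<Rightarrow> real) \<Rightarrow> (nat \<Rightarrow> bdl) \<Rightarrow> real" where
  "efficiency n m c v a = welfare n v a / opt_welfare n m c v"

definition inferred :: "nat \<Rightarrow> (bdl \<Rightarrow> real) \<Rightarrow> (bdl \<times> prices) set \<Rightarrow> bdl set \<Rightarrow> bdl \<Rightarrow> real" where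
  "inferred m vi DQ VQ x =
     (if x \<in> VQ then vi x else Max ({ip m p x | p. (x, p) \<in> DQ} \<union> {0}))"

definition is_WDP :: "nat \<Rightarrow> nat \<Rightarrow> (nat \<Rightarrow> nat) \<Rightarrow> (nat \<Rightarrow> bdl \<Rightarrow> real) \<Rightarrow> (nat \<Rightarrow> bdl) \<Rightarrow> bool" where
  "is_WDP n m c vt a \<longleftrightarrow> a \<in> feasible n m c \<and>
     (\<forall>a'\<in>feasible n m c. welfare n vt a' \<le> welfare n vt a)"

end

theory Submission
  imports Defs
begin

(* Two items A = 0 and B = 1 in unit supply. Bidder 0 values the pair {A, B} at 1 and
  anything less at 0; bidder 1 values every bundle containing A at e < 1. At the uniform
  price e/4 bidder 0 demands {A, B} and bidder 1 demands {A}, so the reports only reveal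
  the lower bounds e/2 and e/4, and the WDP gives {A, B} to bidder 0, which is efficient.
  Querying bidder 1's value of {A} raises that bound to e > e/2, while bidder 0's value
  query (on the empty bundle) reveals nothing, so now the WDP gives A to bidder 1 and
  the welfare drops to e. Choosing e < delta gives the claim. *)

lemma finite_bundles: "finite (bundles m c)"
proof (rule finite_subset)
  show "bundles m c \<subseteq> {x. \<forall>j. (j \<in> {..<m} \<longrightarrow> x j \<in> {..Max (c ` {..<m})})
                                   \<and> (j \<notin> {..<m} \<longrightarrow> x j = 0)}"
  proof (clarsimp simp: bundles_def)
    fix x j assume "\<forall>j<m. x j \<le> c j" "j < m"
    then show "x j \<le> Max (c ` {..<m})"
      by (meson Max_ge finite_imageI finite_lessThan imageI le_trans lessThan_iff)
  qed
  show "finite \<dots>"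
    by (rule finite_set_of_finite_funs) auto
qed

lemma finite_feasible: "finite (feasible n m c)"
proof (rule finite_subset)
  show "feasible n m c \<subseteq> {a. \<forall>i. (i \<in> {..<n} \<longrightarrow> a i \<in> bundles m c)
                                   \<and> (i \<notin> {..<n} \<longrightarrow> a i = (\<lambda>_. 0))}"
    by (auto simp: feasible_def)
  show "finite \<dots>"
    by (rule finite_set_of_finite_funs) (auto simp: finite_bundles)
qed

lemma opt_welfare_WDP: "is_WDP n m c v a \<Longrightarrow> opt_welfare n m c v = welfare n v a"
  unfolding is_WDP_def opt_welfare_def
  by (intro Max_eqI) (auto simp: finite_feasible)

lemma welfare_two_bidders: "welfare 2 v a = v 0 (a 0) + v 1 (a 1)"
  by (simp add: welfare_def numeral_2_eq_2)

lemma ip_two_items: "ip 2 p x = p 0 * real (x 0) + p 1 * real (x 1)"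
  by (simp add: ip_def numeral_2_eq_2)

lemma inferred_single_report:
  "inferred m vi {(r, p)} V x =
     (if x \<in> V then vi x else if x = r then max (ip m p x) 0 else 0)"
proof -
  have "{ip m p' x | p'. (x, p') \<in> {(r, p)}} \<union> {0} = (if x = r then {ip m p x, 0} else {0})"
    by auto
  then show ?thesis
    unfolding inferred_def by (auto simp: max_def)
qed

lemma WDP_awards_dominant_bid:
  assumes wdp: "is_WDP 2 m c t a" and "i < 2"
    and single: "\<And>x. x \<noteq> b \<Longrightarrow> t i x \<le> 0"
    and dominant: "a' \<in> feasible 2 m c" "\<And>x. t (1 - i) x < welfare 2 t a'"
  shows "a i = b"
proof (rule ccontr)
  assume "a i \<noteq> b"
  have "welfare 2 t a = t i (a i) + t (1 - i) (a (1 - i))"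
    using \<open>i < 2\<close> unfolding less_2_cases_iff by (auto simp: welfare_two_bidders)
  with \<open>a i \<noteq> b\<close> have "welfare 2 t a < welfare 2 t a'"
    using single[of "a i"] dominant(2)[of "a (1 - i)"]
    by linarith
  with wdp dominant(1) show False
    unfolding is_WDP_def by fastforce
qed

definition unit_caps :: "nat \<Rightarrow> nat" where
  "unit_caps = (\<lambda>_. 1)"

definition bundle_AB :: bdl where
  "bundle_AB = (\<lambda>j. if j < 2 then 1 else 0)"

definition bundle_A :: bdl where
  "bundle_A = (\<lambda>j. if j = 0 then 1 else 0)"

definition pair_alloc :: "bdl \<Rightarrow> bdl \<Rightarrow> nat \<Rightarrow> bdl" where
  "pair_alloc x y = (\<lambda>i. if i = 0 then x else if i = 1 then y else (\<lambda>_. 0))"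

definition gap_values :: "real \<Rightarrow> nat \<Rightarrow> bdl \<Rightarrow> real" where
  "gap_values e i x =
     (if i = 0 then (if 1 \<le> x 0 \<and> 1 \<le> x 1 then 1 else 0) else (if 1 \<le> x 0 then e else 0))"

definition demanded :: "nat \<Rightarrow> bdl" where
  "demanded i = (if i = 0 then bundle_AB else bundle_A)"

definition queried :: "nat \<Rightarrow> bdl" where
  "queried i = (if i = 0 then (\<lambda>_. 0) else bundle_A)"

lemma bundles_unit_caps_iff:
  "x \<in> bundles 2 unit_caps \<longleftrightarrow> x 0 \<le> 1 \<and> x 1 \<le> 1 \<and> (\<forall>j\<ge>2. x j = 0)"
  unfolding bundles_def unit_caps_def by (auto simp: less_2_cases_iff)

lemma example_bundles_in_bundles:
  "bundle_AB \<in> bundles 2 unit_caps" "bundle_A \<in> bundles 2 unit_caps"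
  "(\<lambda>_. 0) \<in> bundles 2 unit_caps"
  by (simp_all add: bundles_unit_caps_iff bundle_AB_def bundle_A_def)

lemma example_bundles_distinct:
  "(\<lambda>_. 0) \<noteq> bundle_AB" "(\<lambda>_. 0) \<noteq> bundle_A" "bundle_A \<noteq> bundle_AB"
proof -
  have "bundle_AB 0 = 1" "bundle_A 0 = 1" "bundle_A 1 \<noteq> bundle_AB 1"
    by (simp_all add: bundle_AB_def bundle_A_def)
  then show "(\<lambda>_. 0) \<noteq> bundle_AB" "(\<lambda>_. 0) \<noteq> bundle_A" "bundle_A \<noteq> bundle_AB"
    by (metis zero_neq_one)+
qed

lemma feasible_unit_caps_iff:
  "a \<in> feasible 2 2 unit_caps \<longleftrightarrow>
     a 0 \<in> bundles 2 unit_caps \<and> a 1 \<in> bundles 2 unit_caps \<and> (\<forall>i\<ge>2. a i = (\<lambda>_. 0)) \<and>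
     a 0 0 + a 1 0 \<le> 1 \<and> a 0 1 + a 1 1 \<le> 1"
  unfolding feasible_def mem_Collect_eq
proof (rule iffI[rotated])
  assume "a 0 \<in> bundles 2 unit_caps \<and> a 1 \<in> bundles 2 unit_caps \<and> (\<forall>i\<ge>2. a i = (\<lambda>_. 0)) \<and>
     a 0 0 + a 1 0 \<le> 1 \<and> a 0 1 + a 1 1 \<le> 1"
  then show "(\<forall>i<2. a i \<in> bundles 2 unit_caps) \<and> (\<forall>i\<ge>2. a i = (\<lambda>_. 0)) \<and>
     (\<forall>j<2. (\<Sum>i<2. a i j) \<le> unit_caps j)"
    unfolding less_2_cases_iff by (auto simp: numeral_2_eq_2 unit_caps_def)
qed (simp add: numeral_2_eq_2 unit_caps_def)

lemma example_allocs_feasible: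
  "pair_alloc bundle_AB (\<lambda>_. 0) \<in> feasible 2 2 unit_caps"
  "pair_alloc (\<lambda>_. 0) bundle_A \<in> feasible 2 2 unit_caps"
  using example_bundles_in_bundles
  by (simp_all add: feasible_unit_caps_iff pair_alloc_def, simp_all add: bundle_AB_def bundle_A_def)

lemma demanded_is_demand:
  assumes "0 < e" "e < 1"
  shows "is_demand 2 unit_caps (gap_values e i) (\<lambda>_. e / 4) (demanded i)"
  unfolding is_demand_def
proof (intro conjI ballI)
  show "demanded i \<in> bundles 2 unit_caps"
    by (simp add: demanded_def example_bundles_in_bundles)
  fix y assume "y \<in> bundles 2 unit_caps"
  then have "y 0 = 0 \<or> y 0 = 1" "y 1 = 0 \<or> y 1 = 1"
    by (auto simp: bundles_unit_caps_iff)
  then show "gap_values e i y - ip 2 (\<lambda>_. e / 4) y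
      \<le> gap_values e i (demanded i) - ip 2 (\<lambda>_. e / 4) (demanded i)"
    using assms by (cases "y 0 = 0"; cases "y 1 = 0"; cases "i = 0")
      (simp_all add: gap_values_def demanded_def ip_two_items bundle_AB_def bundle_A_def)
qed

lemma opt_welfare_gap_values:
  assumes "0 \<le> e" "e \<le> 1"
  shows "opt_welfare 2 2 unit_caps (gap_values e) = 1"
proof -
  have "is_WDP 2 2 unit_caps (gap_values e) (pair_alloc bundle_AB (\<lambda>_. 0))"
    unfolding is_WDP_def
  proof (intro conjI ballI example_allocs_feasible)
    fix a assume "a \<in> feasible 2 2 unit_caps"
    then show "welfare 2 (gap_values e) a \<le> welfare 2 (gap_values e) (pair_alloc bundle_AB (\<lambda>_. 0))"
      using assms by (auto simp: welfare_two_bidders feasible_unit_caps_iff gap_values_def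
          pair_alloc_def bundle_AB_def)
  qed
  then show ?thesis
    by (simp add: opt_welfare_WDP welfare_two_bidders gap_values_def pair_alloc_def bundle_AB_def)
qed

lemma inferred_from_demand_queries:
  assumes "0 < e"
  shows "inferred 2 (gap_values e i) {(demanded i, \<lambda>_. e / 4)} {} =
    (if i = 0 then (\<lambda>x. if x = bundle_AB then e / 2 else 0)
     else (\<lambda>x. if x = bundle_A then e / 4 else 0))"
  using assms example_bundles_distinct(3) by (intro ext)
    (auto simp: inferred_single_report demanded_def ip_two_items bundle_AB_def bundle_A_def)

lemma inferred_after_value_queries:
  assumes "0 < e"
  shows "inferred 2 (gap_values e i) {(demanded i, \<lambda>_. e / 4)} {queried i} =
    (if i = 0 then (\<lambda>x. if x = bundle_AB then e / 2 else 0)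
     else (\<lambda>x. if x = bundle_A then e else 0))"
  using assms example_bundles_distinct by (intro ext)
    (auto simp: inferred_single_report demanded_def queried_def ip_two_items gap_values_def
      bundle_AB_def bundle_A_def)

lemma efficiency_before_value_queries:
  assumes "0 < e" "e < 1"
    and wdp: "is_WDP 2 2 unit_caps
      (\<lambda>i. inferred 2 (gap_values e i) {(demanded i, \<lambda>_. e / 4)} {}) a"
  shows "efficiency 2 2 unit_caps (gap_values e) a = 1"
proof -
  have "a 0 = bundle_AB"
    using assms example_bundles_distinct
    by (intro WDP_awards_dominant_bid[OF wdp _ _ example_allocs_feasible(1)])
      (auto simp: inferred_from_demand_queries welfare_two_bidders pair_alloc_def)
  moreover have "a \<in> feasible 2 2 unit_caps"
    using wdp by (simp add: is_WDP_def)
  ultimately have "welfare 2 (gap_values e) a = 1"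
    by (auto simp: feasible_unit_caps_iff welfare_two_bidders gap_values_def bundle_AB_def)
  then show ?thesis
    using assms by (simp add: efficiency_def opt_welfare_gap_values)
qed

lemma efficiency_after_value_queries:
  assumes "0 < e" "e < 1"
    and wdp: "is_WDP 2 2 unit_caps
      (\<lambda>i. inferred 2 (gap_values e i) {(demanded i, \<lambda>_. e / 4)} {queried i}) a"
  shows "efficiency 2 2 unit_caps (gap_values e) a = e"
proof -
  have "a 1 = bundle_A"
    using assms example_bundles_distinct
    by (intro WDP_awards_dominant_bid[OF wdp _ _ example_allocs_feasible(2)])
      (auto simp: inferred_after_value_queries welfare_two_bidders pair_alloc_def)
  moreover have "a \<in> feasible 2 2 unit_caps"
    using wdp by (simp add: is_WDP_def)
  ultimately have "welfare 2 (gap_values e) a = e"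
    by (auto simp: feasible_unit_caps_iff welfare_two_bidders gap_values_def bundle_A_def)
  then show ?thesis
    using assms by (simp add: efficiency_def opt_welfare_gap_values)
qed

theorem lemmaD7:
  fixes \<delta> :: real
  assumes "\<delta> > 0"
  shows "\<exists>(n::nat) (m::nat) (c::nat \<Rightarrow> nat) (v::nat \<Rightarrow> bdl \<Rightarrow> real)
           (P::prices list) (resp::nat \<Rightarrow> nat \<Rightarrow> bdl) (q::nat \<Rightarrow> bdl).
     (\<forall>i<n. \<forall>x\<in>bundles m c. 0 \<le> v i x) \<and>
     (\<forall>k<length P. valid_prices m (P ! k)) \<and>
     (\<forall>i<n. \<forall>k<length P. is_demand m c (v i) (P ! k) (resp i k)) \<and>
     (\<forall>i<n. q i \<in> bundles m c) \<and>
     (\<forall>a. is_WDP n m c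
            (\<lambda>i. inferred m (v i) {(resp i k, P ! k) | k. k < length P} {}) a
          \<longrightarrow> efficiency n m c v a = 1) \<and>
     (\<forall>a. is_WDP n m c
            (\<lambda>i. inferred m (v i) {(resp i k, P ! k) | k. k < length P} {q i}) a
          \<longrightarrow> efficiency n m c v a < \<delta>)"
proof -
  define e where "e = min \<delta> 1 / 2"
  have e: "0 < e" "e < 1" "e < \<delta>"
    using assms by (auto simp: e_def)
  define p :: prices where "p = (\<lambda>_. e / 4)"
  have reports: "{(demanded i, [p] ! k) | k. k < length [p]} = {(demanded i, p)}" for i
    by auto
  have "\<forall>i<2. \<forall>x\<in>bundles 2 unit_caps. 0 \<le> gap_values e i x"
    using e by (simp add: gap_values_def)
  moreover have "\<forall>k<length [p]. valid_prices 2 ([p] ! k)"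
    using e by (simp add: valid_prices_def p_def)
  moreover have "\<forall>i<2. \<forall>k<length [p]. is_demand 2 unit_caps (gap_values e i) ([p] ! k) (demanded i)"
    using e by (simp add: demanded_is_demand p_def)
  moreover have "\<forall>i<2. queried i \<in> bundles 2 unit_caps"
    by (simp add: queried_def example_bundles_in_bundles)
  ultimately show ?thesis
    using efficiency_before_value_queries[OF e(1,2)] efficiency_after_value_queries[OF e(1,2)] e(3)
    unfolding reports
    by (intro exI[of _ "2::nat"] exI[of _ unit_caps] exI[of _ "gap_values e"] exI[of _ "[p]"]
        exI[of _ "\<lambda>i k. demanded i"] exI[of _ queried]) (auto simp: p_def)
qed

end
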